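(* Let $P$ be a purely atomic Borel probability measure on $\mathbb{R}$ with support on $n$ points. Then any mean-preserving contraction $Q$ of $P$ is a mixture of simple mean-preserving contractions of $P$ each having support on at most $n$ points.
   Context: Let $P$ have support $\{a_1<\dots<a_n\}$ with masses $\vec p=(p_1,\dots,p_n)$, all positive, and $\vec{pa}=(p_1a_1,\dots,p_na_n)$. A purely atomic probability measure $Q$ with support on distinct points $b_1,\dots,b_m$ and positive masses $\vec q=(q_1,\dots,q_m)$ is a simple mean-preserving contraction (smpc) of $P$ if there is a non-negative row-stochastic $n\times m$ matrix $F$ with $\vec pF=\vec q$ and $(\vec{pa})F=(q_1b_1,\dots,q_mb_m)$. A Borel probability measure $R$ on $\mathbb{R}$ is a mean-preserving contraction (mpc) of $P$ if there is a sequence of smpcs of $P$ converging weakly to $R$. Mixtures of smpcs are convex combinations of the associated measures (for non-purely-atomic mpcs, understood via weak limits). *)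

theory Defs
  imports "HOL-Probability.Probability"
begin

text \<open>Atoms of a measure: points carrying positive mass. For a purely atomic P with
finite support these are exactly the support points a_1 < ... < a_n.\<close>
definition atoms :: "real measure \<Rightarrow> real set" where
  "atoms P = {x. measure P {x} > 0}"

definition finite_atomic :: "nat \<Rightarrow> (nat \<Rightarrow> real) \<Rightarrow> (nat \<Rightarrow> real) \<Rightarrow> real measure \<Rightarrow> bool" where
  "finite_atomic m b q Q \<longleftrightarrow>
     sets Q = sets borel \<and> inj_on b {..<m} \<and> (\<forall>j<m. q j > 0) \<and>
     (\<forall>S \<in> sets borel. emeasure Q S = (\<Sum>j\<in>{j. j < m \<and> b j \<in> S}. ennreal (q j)))"

text \<open>Simple mean-preserving contraction of P with support on m points:
there is a nonnegative row-stochastic matrix F (rows indexed by the support of P,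
columns by 0..m-1) with p F = q and (p a) F = (q_j b_j)_j.\<close>
definition smpc_m :: "real measure \<Rightarrow> nat \<Rightarrow> real measure \<Rightarrow> bool" where
  "smpc_m P m Q \<longleftrightarrow> (\<exists>b q F. finite_atomic m b q Q \<and>
     (\<forall>a\<in>atoms P. \<forall>j<m. F a j \<ge> (0::real)) \<and>
     (\<forall>a\<in>atoms P. (\<Sum>j<m. F a j) = 1) \<and>
     (\<forall>j<m. (\<Sum>a\<in>atoms P. measure P {a} * F a j) = q j) \<and>
     (\<forall>j<m. (\<Sum>a\<in>atoms P. measure P {a} * a * F a j) = q j * b j))"

definition smpc :: "real measure \<Rightarrow> real measure \<Rightarrow> bool" where
  "smpc P Q \<longleftrightarrow> (\<exists>m. smpc_m P m Q)"

definition mpc :: "real measure \<Rightarrow> real measure \<Rightarrow> bool" where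
  "mpc P R \<longleftrightarrow> real_distribution R \<and>
     (\<exists>Qs. (\<forall>k. smpc P (Qs k)) \<and> weak_conv_m Qs R)"

definition finite_mixture :: "(real measure \<Rightarrow> bool) \<Rightarrow> real measure \<Rightarrow> bool" where
  "finite_mixture C R \<longleftrightarrow> (\<exists>(K::nat) w Qs.
     (\<forall>i<K. w i \<ge> (0::real) \<and> C (Qs i)) \<and> (\<Sum>i<K. w i) = 1 \<and>
     sets R = sets borel \<and>
     (\<forall>S\<in>sets borel. emeasure R S = (\<Sum>i<K. ennreal (w i) * emeasure (Qs i) S)))"

end

theory Submission
  imports Defs
begin

text \<open>An smpc of P is the same as a martingale transport plan: a nonnegative matrix \<open>\<pi>\<close> with row
  sums \<open>p a\<close> whose column j has barycentre \<open>b j\<close>. If a plan uses more than n columns, counting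
  unknowns on its support against the constraints (one per row, and one per column with at least
  two entries, since a column with a single entry a has barycentre a automatically) gives a nonzero
  direction D preserving all constraints. Moving along D and along -D until an entry vanishes
  writes \<open>\<pi>\<close> as a convex combination of two plans with smaller support, so by induction every smpc
  is a mixture of smpcs on at most n points; applied to the approximating sequence this is the first
  claim. If the limit R has finite support Y, collecting the columns of the approximating plans in
  small disjoint windows around the points of Y and passing to a convergent subsequence yields a
  plan with column marginal R, so R is itself an smpc and the first step applies to it.\<close>

lemma homogeneous_system_nontrivial_solution:
  fixes c :: "'e \<Rightarrow> 'x \<Rightarrow> 'a::field"
  assumes "finite E" "finite X" "card E < card X"
  shows "\<exists>d. (\<forall>x. x \<notin> X \<longrightarrow> d x = 0) \<and> (\<exists>x\<in>X. d x \<noteq> 0) \<and>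
             (\<forall>e\<in>E. (\<Sum>x\<in>X. c e x * d x) = 0)"
  using assms
proof (induction E arbitrary: X c rule: finite_induct)
  case empty
  then obtain x where "x \<in> X" by fastforce
  then show ?case by (intro exI[of _ "\<lambda>y. if y = x then 1 else 0"]) auto
next
  case (insert e E)
  show ?case
  proof (cases "\<forall>x\<in>X. c e x = 0")
    case True
    with insert show ?thesis by fastforce
  next
    case False
    then obtain x0 where x0: "x0 \<in> X" "c e x0 \<noteq> 0" by blast
    define X' where "X' = X - {x0}"
    have X: "X = insert x0 X'" "x0 \<notin> X'" "finite X'" using x0 insert.prems by (auto simp: X'_def)
    have "card E < card X'" using insert x0 by (simp add: X'_def card_Diff_singleton)
    \<comment> \<open>eliminate the variable x0 by means of the equation e\<close>
    from insert.IH[OF \<open>finite X'\<close> this, of "\<lambda>e' x. c e' x - c e' x0 * c e x / c e x0"]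
    obtain d' where d': "\<forall>x. x \<notin> X' \<longrightarrow> d' x = 0" "\<exists>x\<in>X'. d' x \<noteq> 0"
      "\<forall>e'\<in>E. (\<Sum>x\<in>X'. (c e' x - c e' x0 * c e x / c e x0) * d' x) = 0"
      by blast
    define d where "d = d'(x0 := - (\<Sum>x\<in>X'. c e x * d' x) / c e x0)"
    have sum_X: "(\<Sum>x\<in>X. g x * d x) = g x0 * d x0 + (\<Sum>x\<in>X'. g x * d' x)" for g
    proof -
      have "(\<Sum>x\<in>X'. g x * d x) = (\<Sum>x\<in>X'. g x * d' x)"
        using X(2) by (intro sum.cong) (auto simp: d_def)
      then show ?thesis using X by simp
    qed
    have "(\<Sum>x\<in>X. c e' x * d x) = 0" if "e' \<in> insert e E" for e'
    proof (cases "e' = e")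
      case True
      then show ?thesis using x0 unfolding sum_X by (simp add: d_def)
    next
      case False
      then have "(\<Sum>x\<in>X'. c e' x * d' x) - c e' x0 / c e x0 * (\<Sum>x\<in>X'. c e x * d' x) = 0"
        using that d'(3) by (simp add: algebra_simps sum_subtractf sum_distrib_left)
      then show ?thesis using x0 unfolding sum_X by (simp add: d_def field_simps)
    qed
    moreover have "\<forall>x. x \<notin> X \<longrightarrow> d x = 0" "\<exists>x\<in>X. d x \<noteq> 0"
      using d'(1,2) X by (auto simp: d_def)
    ultimately show ?thesis by blast
  qed
qed

lemma sum_eq_zero_imp_neg:
  fixes f :: "'a \<Rightarrow> real"
  assumes "finite J" "(\<Sum>j\<in>J. f j) = 0" "j0 \<in> J" "f j0 \<noteq> 0"
  shows "\<exists>j\<in>J. f j < 0"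
  using assms sum_nonneg_eq_0_iff[of J f] by (meson not_less)

section \<open>Martingale transport plans\<close>

text \<open>In terms of the row-stochastic matrix F of an smpc, \<open>\<pi> a j = p a * F a j\<close>.\<close>
definition martingale_plan ::
    "real set \<Rightarrow> (real \<Rightarrow> real) \<Rightarrow> 'j set \<Rightarrow> ('j \<Rightarrow> real) \<Rightarrow> (real \<Rightarrow> 'j \<Rightarrow> real) \<Rightarrow> bool" where
  "martingale_plan A p J b \<pi> \<longleftrightarrow> (\<forall>a\<in>A. \<forall>j\<in>J. 0 \<le> \<pi> a j) \<and> (\<forall>a\<in>A. (\<Sum>j\<in>J. \<pi> a j) = p a) \<and>
     (\<forall>j\<in>J. (\<Sum>a\<in>A. \<pi> a j * (a - b j)) = 0)"

definition plan_support :: "real set \<Rightarrow> 'j set \<Rightarrow> (real \<Rightarrow> 'j \<Rightarrow> real) \<Rightarrow> (real \<times> 'j) set" where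
  "plan_support A J \<pi> = {(a, j). a \<in> A \<and> j \<in> J \<and> \<pi> a j \<noteq> 0}"

definition used_columns :: "real set \<Rightarrow> 'j set \<Rightarrow> (real \<Rightarrow> 'j \<Rightarrow> real) \<Rightarrow> 'j set" where
  "used_columns A J \<pi> = {j \<in> J. \<exists>a\<in>A. \<pi> a j \<noteq> 0}"

lemma finite_plan_support: "finite A \<Longrightarrow> finite J \<Longrightarrow> finite (plan_support A J \<pi>)"
  by (rule finite_subset[of _ "A \<times> J"]) (auto simp: plan_support_def)

lemma martingale_plan_column_nonneg:
  "martingale_plan A p J b \<pi> \<Longrightarrow> j \<in> J \<Longrightarrow> 0 \<le> (\<Sum>a\<in>A. \<pi> a j)"
  by (auto simp: martingale_plan_def intro!: sum_nonneg)

lemma martingale_plan_moment: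
  assumes "martingale_plan A p J b \<pi>" "j \<in> J"
  shows "(\<Sum>a\<in>A. \<pi> a j * (a - y)) = (\<Sum>a\<in>A. \<pi> a j) * (b j - y)"
proof -
  have "(\<Sum>a\<in>A. \<pi> a j * (a - y)) = (\<Sum>a\<in>A. \<pi> a j * (a - b j) + \<pi> a j * (b j - y))"
    by (intro sum.cong) (simp_all add: algebra_simps)
  also have "\<dots> = (\<Sum>a\<in>A. \<pi> a j * (a - b j)) + (\<Sum>a\<in>A. \<pi> a j) * (b j - y)"
    by (simp add: sum.distrib sum_distrib_right)
  finally have "(\<Sum>a\<in>A. \<pi> a j * (a - y)) = (\<Sum>a\<in>A. \<pi> a j * (a - b j)) + (\<Sum>a\<in>A. \<pi> a j) * (b j - y)" .
  then show ?thesis using assms by (simp add: martingale_plan_def)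
qed

lemma martingale_plan_add_direction:
  assumes \<pi>: "martingale_plan A p J b \<pi>"
    and rows: "\<forall>a\<in>A. (\<Sum>j\<in>J. D a j) = 0"
    and moments: "\<forall>j\<in>J. (\<Sum>a\<in>A. D a j * (a - b j)) = 0"
    and nonneg: "\<forall>a\<in>A. \<forall>j\<in>J. 0 \<le> \<pi> a j + t * D a j"
  shows "martingale_plan A p J b (\<lambda>a j. \<pi> a j + t * D a j)"
  unfolding martingale_plan_def
proof (intro conjI ballI)
  fix a assume "a \<in> A"
  then show "(\<Sum>j\<in>J. \<pi> a j + t * D a j) = p a"
    using \<pi> rows by (simp add: sum.distrib martingale_plan_def flip: sum_distrib_left)
next
  fix j assume "j \<in> J"
  then show "(\<Sum>a\<in>A. (\<pi> a j + t * D a j) * (a - b j)) = 0"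
    using \<pi> moments by (simp add: distrib_right sum.distrib martingale_plan_def mult.assoc
        flip: sum_distrib_left)
qed (use nonneg in auto)

lemma martingale_plan_perturb:
  assumes "finite A" "finite J" and \<pi>: "martingale_plan A p J b \<pi>"
    and rows: "\<forall>a\<in>A. (\<Sum>j\<in>J. D a j) = 0"
    and moments: "\<forall>j\<in>J. (\<Sum>a\<in>A. D a j * (a - b j)) = 0"
    and supp: "\<forall>a j. (a, j) \<notin> plan_support A J \<pi> \<longrightarrow> D a j = 0"
    and neg: "D a0 j0 < 0"
  shows "\<exists>t>0. martingale_plan A p J b (\<lambda>a j. \<pi> a j + t * D a j) \<and>
           card (plan_support A J (\<lambda>a j. \<pi> a j + t * D a j)) < card (plan_support A J \<pi>)"
proof -
  define N where "N = {(a, j) \<in> plan_support A J \<pi>. D a j < 0}"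
  define g where "g = (\<lambda>(a, j). \<pi> a j / - D a j)"
  define t where "t = Min (g ` N)"
  define \<pi>' where "\<pi>' = (\<lambda>a j. \<pi> a j + t * D a j)"
  have fin: "finite (plan_support A J \<pi>)" using assms by (simp add: finite_plan_support)
  then have "finite N" by (rule finite_subset[rotated]) (auto simp: N_def)
  moreover have "(a0, j0) \<in> N" using neg supp by (force simp: N_def)
  ultimately have "t \<in> g ` N" unfolding t_def by (intro Min_in) auto
  then obtain a1 j1 where a1j1: "(a1, j1) \<in> N" "t = g (a1, j1)" by auto
  have t_le: "t \<le> g x" if "x \<in> N" for x
    unfolding t_def using \<open>finite N\<close> that by simp
  have support_pos: "\<pi> a j > 0" if "(a, j) \<in> plan_support A J \<pi>" for a j
    using that \<pi> by (auto simp: plan_support_def martingale_plan_def less_le)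
  have "t > 0" using a1j1 support_pos[of a1 j1] by (auto simp: N_def g_def divide_pos_neg)
  have "0 \<le> \<pi> a j + t * D a j" if "a \<in> A" "j \<in> J" for a j
  proof (cases "D a j < 0")
    case True
    then have "(a, j) \<in> N" using supp by (force simp: N_def)
    then have "t \<le> \<pi> a j / - D a j" using t_le[of "(a, j)"] by (simp add: g_def)
    then have "t * - D a j \<le> \<pi> a j" using True by (metis neg_0_less_iff_less pos_le_divide_eq)
    then show ?thesis by simp
  next
    case False
    then show ?thesis using \<pi> that \<open>t > 0\<close> by (simp add: martingale_plan_def)
  qed
  then have "martingale_plan A p J b \<pi>'"
    unfolding \<pi>'_def using \<pi> rows moments by (intro martingale_plan_add_direction) auto
  moreover have "plan_support A J \<pi>' \<subset> plan_support A J \<pi>"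
  proof -
    have "plan_support A J \<pi>' \<subseteq> plan_support A J \<pi>" using supp by (auto simp: plan_support_def \<pi>'_def)
    moreover have "\<pi>' a1 j1 = 0" using a1j1 by (simp add: \<pi>'_def g_def N_def)
    ultimately show ?thesis using a1j1(1) by (auto simp: N_def plan_support_def)
  qed
  then have "card (plan_support A J \<pi>') < card (plan_support A J \<pi>)" using fin by (simp add: psubset_card_mono)
  ultimately show ?thesis using \<open>t > 0\<close> unfolding \<pi>'_def by blast
qed

lemma sum_supported_on_pairs:
  fixes f d :: "'a \<times> 'b \<Rightarrow> 'c::comm_semiring_0"
  assumes "finite A" "finite J" "X \<subseteq> A \<times> J" "\<forall>x. x \<notin> X \<longrightarrow> d x = 0"
  shows "(\<Sum>x\<in>X. f x * d x) = (\<Sum>a\<in>A. \<Sum>j\<in>J. f (a, j) * d (a, j))"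
proof -
  have "(\<Sum>x\<in>X. f x * d x) = (\<Sum>x\<in>A \<times> J. f x * d x)"
    using assms by (intro sum.mono_neutral_left) auto
  then show ?thesis by (simp add: sum.cartesian_product)
qed

lemma card_used_columns_add_le:
  assumes fA: "finite A" and fJ: "finite J"
  shows "card (used_columns A J \<pi>) + card {j \<in> J. 2 \<le> card {a \<in> A. \<pi> a j \<noteq> 0}} \<le>
    card (plan_support A J \<pi>)"
proof -
  define col where "col j = {a \<in> A. \<pi> a j \<noteq> 0}" for j
  have fin_col: "finite (col j)" for j using fA by (simp add: col_def)
  have "plan_support A J \<pi> = (\<lambda>(j, a). (a, j)) ` (SIGMA j:J. col j)"
    by (force simp: plan_support_def col_def)
  then have card_support: "card (plan_support A J \<pi>) = (\<Sum>j\<in>J. card (col j))"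
    using fJ fin_col by (simp add: card_image inj_on_def card_SigmaI)
  have "used_columns A J \<pi> = {j \<in> J. col j \<noteq> {}}"
    by (auto simp: used_columns_def col_def)
  then have "card (used_columns A J \<pi>) + card {j \<in> J. 2 \<le> card (col j)} =
      (\<Sum>j\<in>J. (if col j \<noteq> {} then 1 else 0) + (if 2 \<le> card (col j) then 1 else 0))"
    using fJ by (simp add: sum.distrib flip: sum.inter_filter)
  also have "\<dots> \<le> card (plan_support A J \<pi>)"
    unfolding card_support using fin_col by (intro sum_mono) (auto simp: card_gt_0_iff Suc_le_eq)
  finally show ?thesis by (simp add: col_def)
qed

lemma martingale_plan_singleton_column:
  assumes "martingale_plan A p J b \<pi>" "finite A" "j \<in> J" "{a \<in> A. \<pi> a j \<noteq> 0} = {a0}"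
  shows "a0 = b j"
proof -
  have "(\<Sum>a\<in>A. \<pi> a j * (a - b j)) = (\<Sum>a\<in>{a0}. \<pi> a j * (a - b j))"
    using assms(2,4) by (intro sum.mono_neutral_right) auto
  then have "\<pi> a0 j * (a0 - b j) = 0" using assms(1,3) by (simp add: martingale_plan_def)
  moreover have "\<pi> a0 j \<noteq> 0" using assms(4) by auto
  ultimately show ?thesis by simp
qed

lemma martingale_plan_direction:
  assumes fA: "finite A" and fJ: "finite J" and \<pi>: "martingale_plan A p J b \<pi>"
    and many: "card A < card (used_columns A J \<pi>)"
  shows "\<exists>D. (\<forall>a\<in>A. (\<Sum>j\<in>J. D a j) = 0) \<and> (\<forall>j\<in>J. (\<Sum>a\<in>A. D a j * (a - b j)) = 0) \<and>
             (\<forall>a j. (a, j) \<notin> plan_support A J \<pi> \<longrightarrow> D a j = 0) \<and> (\<exists>a j. D a j < 0) \<and> (\<exists>a j. D a j > 0)"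
proof -
  define col where "col j = {a \<in> A. \<pi> a j \<noteq> 0}" for j
  define X where "X = plan_support A J \<pi>"
  define J2 where "J2 = {j \<in> J. 2 \<le> card (col j)}"
  \<comment> \<open>A column with a single entry a has barycentre a = b j, so only the columns in J2 need a
     moment equation; this is what makes the system underdetermined.\<close>
  define E :: "(real + 'a) set" where "E = Inl ` A \<union> Inr ` J2"
  define c :: "real + 'a \<Rightarrow> real \<times> 'a \<Rightarrow> real" where
    "c e x = (case e of Inl a' \<Rightarrow> if fst x = a' then 1 else 0
                      | Inr j' \<Rightarrow> if snd x = j' then fst x - b j' else 0)" for e x
  have fin_col: "finite (col j)" for j using fA by (simp add: col_def)
  have XAJ: "X \<subseteq> A \<times> J" by (auto simp: X_def plan_support_def)
  have "card E = card A + card J2"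
    unfolding E_def using fA fJ by (subst card_Un_disjoint) (auto simp: card_image J2_def)
  then have "card E < card X"
    using many card_used_columns_add_le[OF fA fJ, of \<pi>] by (simp add: X_def J2_def col_def)
  moreover have "finite E" "finite X" using fA fJ by (auto simp: E_def J2_def X_def finite_plan_support)
  ultimately obtain d where d: "\<forall>x. x \<notin> X \<longrightarrow> d x = 0" "\<exists>x\<in>X. d x \<noteq> 0"
    "\<forall>e\<in>E. (\<Sum>x\<in>X. c e x * d x) = 0"
    using homogeneous_system_nontrivial_solution[of E X c] by blast
  define D where "D a j = d (a, j)" for a j
  have equation: "(\<Sum>a\<in>A. \<Sum>j\<in>J. c e (a, j) * D a j) = 0" if "e \<in> E" for e
    using d(3) that sum_supported_on_pairs[OF fA fJ XAJ d(1)] by (simp add: D_def)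
  have supp: "\<forall>a j. (a, j) \<notin> plan_support A J \<pi> \<longrightarrow> D a j = 0"
    using d(1) by (simp add: D_def X_def)
  have rows: "\<forall>a\<in>A. (\<Sum>j\<in>J. D a j) = 0"
  proof
    fix a assume "a \<in> A"
    then have "(\<Sum>a'\<in>A. \<Sum>j\<in>J. c (Inl a) (a', j) * D a' j) = 0" by (intro equation) (simp add: E_def)
    moreover have "(\<Sum>j\<in>J. c (Inl a) (a', j) * D a' j) = (if a' = a then \<Sum>j\<in>J. D a j else 0)" for a'
      by (cases "a' = a") (simp_all add: c_def)
    ultimately show "(\<Sum>j\<in>J. D a j) = 0" using \<open>a \<in> A\<close> fA by simp
  qed
  have moments: "\<forall>j\<in>J. (\<Sum>a\<in>A. D a j * (a - b j)) = 0"
  proof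
    fix j assume j: "j \<in> J"
    have on_col: "(\<Sum>a\<in>A. D a j * (a - b j)) = (\<Sum>a\<in>col j. D a j * (a - b j))"
      using fA supp j by (intro sum.mono_neutral_right) (auto simp: col_def plan_support_def)
    consider "j \<in> J2" | "col j = {}" | a0 where "col j = {a0}"
    proof -
      have "j \<in> J2 \<or> card (col j) = 0 \<or> card (col j) = 1" using j by (auto simp: J2_def)
      then show ?thesis using that fin_col[of j] by (auto simp: card_Suc_eq)
    qed
    then show "(\<Sum>a\<in>A. D a j * (a - b j)) = 0"
    proof cases
      case 1
      then have "(\<Sum>a\<in>A. \<Sum>j'\<in>J. c (Inr j) (a, j') * D a j') = 0" by (intro equation) (simp add: E_def)
      moreover have "(\<Sum>j'\<in>J. c (Inr j) (a, j') * D a j') = D a j * (a - b j)" for a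
      proof -
        have "(\<Sum>j'\<in>J. c (Inr j) (a, j') * D a j') = (\<Sum>j'\<in>J. if j' = j then D a j * (a - b j) else 0)"
          by (intro sum.cong) (auto simp: c_def)
        then show ?thesis using j fJ by simp
      qed
      ultimately show ?thesis by simp
    next
      case 2
      then show ?thesis using on_col by simp
    next
      case 3
      then have "a0 = b j" using martingale_plan_singleton_column[OF \<pi> fA j] by (simp add: col_def)
      then show ?thesis using on_col 3 by simp
    qed
  qed
  obtain a0 j0 where "(a0, j0) \<in> X" "D a0 j0 \<noteq> 0" using d(2) by (auto simp: D_def)
  then have "a0 \<in> A" "j0 \<in> J" using XAJ by auto
  then have "\<exists>j\<in>J. D a0 j < 0" "\<exists>j\<in>J. - D a0 j < 0"
    using rows \<open>D a0 j0 \<noteq> 0\<close> sum_eq_zero_imp_neg[OF fJ, of "\<lambda>j. D a0 j"]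
      sum_eq_zero_imp_neg[OF fJ, of "\<lambda>j. - D a0 j"] by (auto simp: sum_negf)
  then show ?thesis using rows moments supp by (intro exI[of _ D]) (auto simp: neg_less_0_iff_less)
qed

lemma martingale_plan_split:
  assumes fA: "finite A" and fJ: "finite J" and \<pi>: "martingale_plan A p J b \<pi>"
    and many: "card A < card (used_columns A J \<pi>)"
  shows "\<exists>\<pi>1 \<pi>2 l. 0 \<le> l \<and> l \<le> 1 \<and>
    martingale_plan A p J b \<pi>1 \<and> card (plan_support A J \<pi>1) < card (plan_support A J \<pi>) \<and>
    martingale_plan A p J b \<pi>2 \<and> card (plan_support A J \<pi>2) < card (plan_support A J \<pi>) \<and>
    (\<forall>a j. \<pi> a j = l * \<pi>1 a j + (1 - l) * \<pi>2 a j)"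
proof -
  obtain D where rows: "\<forall>a\<in>A. (\<Sum>j\<in>J. D a j) = 0"
    and moments: "\<forall>j\<in>J. (\<Sum>a\<in>A. D a j * (a - b j)) = 0"
    and supp: "\<forall>a j. (a, j) \<notin> plan_support A J \<pi> \<longrightarrow> D a j = 0"
    and "\<exists>a j. D a j < 0" "\<exists>a j. D a j > 0"
    using martingale_plan_direction[OF fA fJ \<pi> many] by auto
  then obtain a1 j1 a2 j2 where "D a1 j1 < 0" "- D a2 j2 < 0" by auto
  \<comment> \<open>move along D and along -D until the support shrinks; \<pi> lies between the two endpoints\<close>
  obtain t1 where t1: "t1 > 0" "martingale_plan A p J b (\<lambda>a j. \<pi> a j + t1 * D a j)"
    "card (plan_support A J (\<lambda>a j. \<pi> a j + t1 * D a j)) < card (plan_support A J \<pi>)"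
    using martingale_plan_perturb[OF fA fJ \<pi> rows moments supp \<open>D a1 j1 < 0\<close>] by blast
  have "\<exists>t>0. martingale_plan A p J b (\<lambda>a j. \<pi> a j + t * - D a j) \<and>
      card (plan_support A J (\<lambda>a j. \<pi> a j + t * - D a j)) < card (plan_support A J \<pi>)"
    by (rule martingale_plan_perturb[OF fA fJ \<pi>, where D="\<lambda>a j. - D a j"])
      (use rows moments supp \<open>- D a2 j2 < 0\<close> in \<open>auto simp: sum_negf\<close>)
  then obtain t2 where t2: "t2 > 0" "martingale_plan A p J b (\<lambda>a j. \<pi> a j - t2 * D a j)"
    "card (plan_support A J (\<lambda>a j. \<pi> a j - t2 * D a j)) < card (plan_support A J \<pi>)"
    by auto
  define l where "l = t2 / (t1 + t2)"
  have l: "0 \<le> l" "l \<le> 1" "1 - l = t1 / (t1 + t2)" using t1(1) t2(1) by (auto simp: l_def field_simps)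
  have "\<pi> a j = l * (\<pi> a j + t1 * D a j) + (1 - l) * (\<pi> a j - t2 * D a j)" for a j
  proof -
    have "l * (\<pi> a j + t1 * D a j) + (1 - l) * (\<pi> a j - t2 * D a j) =
        \<pi> a j + (l * t1 - (1 - l) * t2) * D a j"
      by (simp add: algebra_simps)
    also have "l * t1 - (1 - l) * t2 = 0" unfolding l(3) by (simp add: l_def)
    finally show ?thesis by simp
  qed
  then show ?thesis using l(1,2) t1(2,3) t2(2,3) by blast
qed

section \<open>Decomposition into sparse plans\<close>

lemma finite_mixture_single: "C Q \<Longrightarrow> sets Q = sets borel \<Longrightarrow> finite_mixture C Q"
  unfolding finite_mixture_def by (intro exI[of _ 1] exI[of _ "\<lambda>_. 1"] exI[of _ "\<lambda>_. Q"]) auto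

lemma sum_lessThan_add:
  fixes m n :: nat
  shows "(\<Sum>i<m + n. f i) = (\<Sum>i<m. f i) + (\<Sum>i<n. f (m + i))"
  by (induction n) (simp_all add: ac_simps)

lemma finite_mixture_convex:
  assumes Q1: "finite_mixture C Q1" and Q2: "finite_mixture C Q2" and l: "0 \<le> l" "l \<le> 1"
    and "sets R = sets borel"
    and R: "\<And>S. S \<in> sets borel \<Longrightarrow>
      emeasure R S = ennreal l * emeasure Q1 S + ennreal (1 - l) * emeasure Q2 S"
  shows "finite_mixture C R"
proof -
  obtain K1 :: nat and w1 Q1s where 1: "\<forall>i<K1. 0 \<le> w1 i \<and> C (Q1s i)" "(\<Sum>i<K1. w1 i) = 1"
    "\<forall>S\<in>sets borel. emeasure Q1 S = (\<Sum>i<K1. ennreal (w1 i) * emeasure (Q1s i) S)"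
    using Q1 unfolding finite_mixture_def by blast
  obtain K2 :: nat and w2 Q2s where 2: "\<forall>i<K2. 0 \<le> w2 i \<and> C (Q2s i)" "(\<Sum>i<K2. w2 i) = 1"
    "\<forall>S\<in>sets borel. emeasure Q2 S = (\<Sum>i<K2. ennreal (w2 i) * emeasure (Q2s i) S)"
    using Q2 unfolding finite_mixture_def by blast
  define w where "w i = (if i < K1 then l * w1 i else (1 - l) * w2 (i - K1))" for i
  define Qs where "Qs i = (if i < K1 then Q1s i else Q2s (i - K1))" for i
  have scale: "ennreal c * (\<Sum>i<K. ennreal (v i) * emeasure (Ps i) S) =
      (\<Sum>i<K. ennreal (c * v i) * emeasure (Ps i) S)" if "0 \<le> c" "\<forall>i<K. 0 \<le> v i"
    for c v K and Ps :: "nat \<Rightarrow> real measure" and S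
    using that by (simp add: sum_distrib_left ennreal_mult mult.assoc)
  show ?thesis unfolding finite_mixture_def
  proof (intro exI[of _ "K1 + K2"] exI[of _ w] exI[of _ Qs] conjI ballI)
    show "\<forall>i<K1 + K2. 0 \<le> w i \<and> C (Qs i)" using 1(1) 2(1) l by (auto simp: w_def Qs_def)
    show "(\<Sum>i<K1 + K2. w i) = 1" using 1(2) 2(2) by (simp add: sum_lessThan_add w_def flip: sum_distrib_left)
    show "sets R = sets borel" by fact
    fix S :: "real set" assume "S \<in> sets borel"
    then show "emeasure R S = (\<Sum>i<K1 + K2. ennreal (w i) * emeasure (Qs i) S)"
      using 1 2 l by (simp add: R sum_lessThan_add scale w_def Qs_def)
  qed
qed

definition plan_measure :: "real set \<Rightarrow> 'j set \<Rightarrow> ('j \<Rightarrow> real) \<Rightarrow> (real \<Rightarrow> 'j \<Rightarrow> real) \<Rightarrow> real measure" where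
  "plan_measure A J b \<pi> = distr (point_measure J (\<lambda>j. ennreal (\<Sum>a\<in>A. \<pi> a j))) borel b"

lemma sets_plan_measure [simp]: "sets (plan_measure A J b \<pi>) = sets borel"
  by (simp add: plan_measure_def)

lemma emeasure_plan_measure:
  assumes "finite J" "S \<in> sets borel"
  shows "emeasure (plan_measure A J b \<pi>) S = (\<Sum>j\<in>{j \<in> J. b j \<in> S}. ennreal (\<Sum>a\<in>A. \<pi> a j))"
proof -
  have "emeasure (plan_measure A J b \<pi>) S =
      emeasure (point_measure J (\<lambda>j. ennreal (\<Sum>a\<in>A. \<pi> a j))) (b -` S \<inter> J)"
    unfolding plan_measure_def using assms by (subst emeasure_distr) (auto simp: space_point_measure)
  also have "\<dots> = (\<Sum>j\<in>b -` S \<inter> J. ennreal (\<Sum>a\<in>A. \<pi> a j))"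
    using assms by (intro emeasure_point_measure_finite) auto
  also have "b -` S \<inter> J = {j \<in> J. b j \<in> S}" by auto
  finally show ?thesis .
qed

lemma emeasure_plan_measure_convex:
  assumes "finite J" "S \<in> sets borel" "0 \<le> l" "l \<le> 1"
    and "\<forall>j\<in>J. 0 \<le> (\<Sum>a\<in>A. \<pi>1 a j)" "\<forall>j\<in>J. 0 \<le> (\<Sum>a\<in>A. \<pi>2 a j)"
    and "\<forall>a\<in>A. \<forall>j\<in>J. \<pi> a j = l * \<pi>1 a j + (1 - l) * \<pi>2 a j"
  shows "emeasure (plan_measure A J b \<pi>) S =
    ennreal l * emeasure (plan_measure A J b \<pi>1) S + ennreal (1 - l) * emeasure (plan_measure A J b \<pi>2) S"
proof -
  have "ennreal (\<Sum>a\<in>A. \<pi> a j) =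
      ennreal l * ennreal (\<Sum>a\<in>A. \<pi>1 a j) + ennreal (1 - l) * ennreal (\<Sum>a\<in>A. \<pi>2 a j)" if "j \<in> J" for j
    using assms that by (simp add: sum.distrib ennreal_plus ennreal_mult flip: sum_distrib_left)
  then have "(\<Sum>j\<in>{j \<in> J. b j \<in> S}. ennreal (\<Sum>a\<in>A. \<pi> a j)) =
      (\<Sum>j\<in>{j \<in> J. b j \<in> S}. ennreal l * ennreal (\<Sum>a\<in>A. \<pi>1 a j) +
        ennreal (1 - l) * ennreal (\<Sum>a\<in>A. \<pi>2 a j))"
    by (intro sum.cong) auto
  then show ?thesis using assms(1,2) by (simp add: emeasure_plan_measure sum.distrib sum_distrib_left)
qed

lemma plan_measure_finite_mixture:
  assumes fA: "finite A" and fJ: "finite J" and \<pi>: "martingale_plan A p J b \<pi>"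
    and sparse: "\<And>\<sigma>. martingale_plan A p J b \<sigma> \<Longrightarrow> card (used_columns A J \<sigma>) \<le> card A \<Longrightarrow>
      C (plan_measure A J b \<sigma>)"
  shows "finite_mixture C (plan_measure A J b \<pi>)"
  using \<pi>
proof (induction "card (plan_support A J \<pi>)" arbitrary: \<pi> rule: less_induct)
  case less
  show ?case
  proof (cases "card (used_columns A J \<pi>) \<le> card A")
    case True
    then show ?thesis using less.prems sparse by (intro finite_mixture_single) auto
  next
    case False
    then obtain \<pi>1 \<pi>2 l where l: "0 \<le> l" "l \<le> 1"
      and \<pi>1: "martingale_plan A p J b \<pi>1" "card (plan_support A J \<pi>1) < card (plan_support A J \<pi>)"
      and \<pi>2: "martingale_plan A p J b \<pi>2" "card (plan_support A J \<pi>2) < card (plan_support A J \<pi>)"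
      and comb: "\<forall>a j. \<pi> a j = l * \<pi>1 a j + (1 - l) * \<pi>2 a j"
      using martingale_plan_split[OF fA fJ less.prems] by auto
    show ?thesis
    proof (rule finite_mixture_convex[OF less.hyps[OF \<pi>1(2,1)] less.hyps[OF \<pi>2(2,1)] l])
      fix S :: "real set" assume "S \<in> sets borel"
      then show "emeasure (plan_measure A J b \<pi>) S =
          ennreal l * emeasure (plan_measure A J b \<pi>1) S + ennreal (1 - l) * emeasure (plan_measure A J b \<pi>2) S"
        using fJ l \<pi>1(1) \<pi>2(1) comb martingale_plan_column_nonneg
        by (intro emeasure_plan_measure_convex) auto
    qed simp
  qed
qed

section \<open>Simple mean-preserving contractions as plans\<close>

lemma measure_eq_sum_finite_support:
  fixes M :: "real measure"
  assumes "prob_space M" "sets M = sets borel" "finite B" "emeasure M B = 1" "S \<in> sets borel"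
  shows "measure M S = (\<Sum>x\<in>S \<inter> B. measure M {x})"
proof -
  interpret prob_space M by fact
  have B: "B \<in> sets M" using assms(2,3) by (simp add: finite_imp_closed)
  then have "AE x in M. x \<in> B" using assms(4) by (simp add: AE_in_set_eq_1 emeasure_eq_measure)
  then have "measure M S = measure M (S \<inter> B)"
    using assms(2,5) B by (intro measure_eq_AE) auto
  also have "\<dots> = (\<Sum>x\<in>S \<inter> B. measure M {x})"
    using assms(2,3) by (intro measure_eq_sum_singleton) auto
  finally show ?thesis .
qed

lemma atoms_eq_finite_support:
  fixes P :: "real measure"
  assumes "prob_space P" "sets P = sets borel" "finite A" "emeasure P A = 1"
    and "\<forall>a\<in>A. measure P {a} > 0"
  shows "atoms P = A"
proof -
  have "measure P {x} = 0" if "x \<notin> A" for x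
    using measure_eq_sum_finite_support[OF assms(1-4), of "{x}"] that by simp
  then show ?thesis using assms(5) unfolding atoms_def by force
qed

lemma finite_atomic_plan_measure:
  assumes fJ: "finite J" and b: "inj_on b J" and nonneg: "\<forall>j\<in>J. 0 \<le> (\<Sum>a\<in>A. \<pi> a j)"
    and e: "bij_betw e {..<m} {j \<in> J. (\<Sum>a\<in>A. \<pi> a j) \<noteq> 0}"
  shows "finite_atomic m (b \<circ> e) (\<lambda>i. \<Sum>a\<in>A. \<pi> a (e i)) (plan_measure A J b \<pi>)"
  unfolding finite_atomic_def
proof (intro conjI allI impI ballI)
  define U where "U = {j \<in> J. (\<Sum>a\<in>A. \<pi> a j) \<noteq> 0}"
  have e_U: "e ` {..<m} = U" "inj_on e {..<m}" using e by (auto simp: U_def bij_betw_def)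
  show "inj_on (b \<circ> e) {..<m}"
    using e_U b by (intro comp_inj_on) (auto simp: U_def intro: inj_on_subset)
  show "0 < (\<Sum>a\<in>A. \<pi> a (e i))" if "i < m" for i
    using that e_U(1) nonneg by (force simp: U_def less_le)
  fix S :: "real set" assume S: "S \<in> sets borel"
  have "{j \<in> U. b j \<in> S} = e ` {i. i < m \<and> (b \<circ> e) i \<in> S}" using e_U(1) by auto
  moreover have "inj_on e {i. i < m \<and> (b \<circ> e) i \<in> S}" using e_U(2) by (auto intro: inj_on_subset)
  ultimately have "(\<Sum>j\<in>{j \<in> U. b j \<in> S}. ennreal (\<Sum>a\<in>A. \<pi> a j)) =
      (\<Sum>i\<in>{i. i < m \<and> (b \<circ> e) i \<in> S}. ennreal (\<Sum>a\<in>A. \<pi> a (e i)))"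
    by (simp add: sum.reindex)
  moreover have "(\<Sum>j\<in>{j \<in> J. b j \<in> S}. ennreal (\<Sum>a\<in>A. \<pi> a j)) =
      (\<Sum>j\<in>{j \<in> U. b j \<in> S}. ennreal (\<Sum>a\<in>A. \<pi> a j))"
    using fJ by (intro sum.mono_neutral_right) (auto simp: U_def)
  ultimately show "emeasure (plan_measure A J b \<pi>) S =
      (\<Sum>i\<in>{i. i < m \<and> (b \<circ> e) i \<in> S}. ennreal (\<Sum>a\<in>A. \<pi> a (e i)))"
    using fJ S by (simp add: emeasure_plan_measure)
qed simp

lemma used_columns_martingale_plan:
  assumes "finite A" "martingale_plan A p J b \<sigma>"
  shows "used_columns A J \<sigma> = {j \<in> J. (\<Sum>a\<in>A. \<sigma> a j) \<noteq> 0}"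
  using assms sum_nonneg_eq_0_iff[of A "\<lambda>a. \<sigma> a _"]
  by (auto simp: used_columns_def martingale_plan_def)

lemma smpc_m_plan_measure:
  assumes fA: "finite A" and fJ: "finite J" and at: "atoms P = A" and pos: "\<forall>a\<in>A. measure P {a} > 0"
    and b: "inj_on b J" and \<sigma>: "martingale_plan A (\<lambda>a. measure P {a}) J b \<sigma>"
  shows "smpc_m P (card (used_columns A J \<sigma>)) (plan_measure A J b \<sigma>)"
proof -
  define U where "U = used_columns A J \<sigma>"
  define m where "m = card U"
  have "finite U" using fJ by (simp add: U_def used_columns_def)
  then obtain e where e: "bij_betw e {..<m} U"
    using ex_bij_betw_nat_finite by (auto simp: m_def atLeast0LessThan)
  have e_J: "e i \<in> J" if "i < m" for i using e that by (auto simp: bij_betw_def U_def used_columns_def)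
  have reindex: "(\<Sum>j\<in>J. \<sigma> a j) = (\<Sum>i<m. \<sigma> a (e i))" if "a \<in> A" for a
  proof -
    have "(\<Sum>j\<in>J. \<sigma> a j) = (\<Sum>j\<in>U. \<sigma> a j)"
      using fJ that by (intro sum.mono_neutral_right) (auto simp: U_def used_columns_def)
    also have "\<dots> = (\<Sum>i<m. \<sigma> a (e i))" using e by (simp add: sum.reindex_bij_betw)
    finally show ?thesis .
  qed
  have atomic: "finite_atomic m (b \<circ> e) (\<lambda>i. \<Sum>a\<in>A. \<sigma> a (e i)) (plan_measure A J b \<sigma>)"
    using e fJ b \<sigma> fA
    by (intro finite_atomic_plan_measure)
      (auto simp: U_def used_columns_martingale_plan martingale_plan_column_nonneg)
  show ?thesis unfolding smpc_m_def at U_def[symmetric] m_def[symmetric]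
  proof (rule exI[of _ "b \<circ> e"], rule exI[of _ "\<lambda>i. \<Sum>a\<in>A. \<sigma> a (e i)"],
      rule exI[of _ "\<lambda>a i. \<sigma> a (e i) / measure P {a}"], intro conjI ballI allI impI)
    fix a i assume "a \<in> A" "i < m"
    then show "0 \<le> \<sigma> a (e i) / measure P {a}"
      using \<sigma> e_J by (simp add: martingale_plan_def)
  next
    fix a assume "a \<in> A"
    moreover from this have "measure P {a} \<noteq> 0" using pos by force
    ultimately show "(\<Sum>i<m. \<sigma> a (e i) / measure P {a}) = 1"
      using \<sigma> reindex by (simp add: martingale_plan_def flip: sum_divide_distrib)
  next
    fix i assume "i < m"
    show "(\<Sum>a\<in>A. measure P {a} * (\<sigma> a (e i) / measure P {a})) = (\<Sum>a\<in>A. \<sigma> a (e i))"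
      using pos by (intro sum.cong) auto
    have "(\<Sum>a\<in>A. measure P {a} * a * (\<sigma> a (e i) / measure P {a})) = (\<Sum>a\<in>A. \<sigma> a (e i) * (a - 0))"
      using pos by (intro sum.cong) auto
    also have "\<dots> = (\<Sum>a\<in>A. \<sigma> a (e i)) * (b (e i) - 0)"
      by (rule martingale_plan_moment[OF \<sigma> e_J[OF \<open>i < m\<close>]])
    finally show "(\<Sum>a\<in>A. measure P {a} * a * (\<sigma> a (e i) / measure P {a})) =
        (\<Sum>a\<in>A. \<sigma> a (e i)) * (b \<circ> e) i"
      by simp
  qed (rule atomic)
qed

lemma smpc_m_imp_plan:
  assumes at: "atoms P = A" and Q: "smpc_m P m Q"
  shows "\<exists>b \<pi>. inj_on b {..<m} \<and> martingale_plan A (\<lambda>a. measure P {a}) {..<m} b \<pi> \<and>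
    Q = plan_measure A {..<m} b \<pi>"
proof -
  obtain b q F where fa: "finite_atomic m b q Q" and F: "\<forall>a\<in>A. \<forall>j<m. F a j \<ge> 0"
    "\<forall>a\<in>A. (\<Sum>j<m. F a j) = 1" and q: "\<forall>j<m. (\<Sum>a\<in>A. measure P {a} * F a j) = q j"
    and qb: "\<forall>j<m. (\<Sum>a\<in>A. measure P {a} * a * F a j) = q j * b j"
    using Q unfolding smpc_m_def at by blast
  define \<pi> where "\<pi> a j = measure P {a} * F a j" for a j
  have "martingale_plan A (\<lambda>a. measure P {a}) {..<m} b \<pi>"
    unfolding martingale_plan_def
  proof (intro conjI ballI)
    fix a j assume "a \<in> A" "j \<in> {..<m}"
    then show "0 \<le> \<pi> a j" using F by (simp add: \<pi>_def)
  next
    fix a assume "a \<in> A"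
    then show "(\<Sum>j\<in>{..<m}. \<pi> a j) = measure P {a}" using F by (simp add: \<pi>_def flip: sum_distrib_left)
  next
    fix j assume "j \<in> {..<m}"
    then show "(\<Sum>a\<in>A. \<pi> a j * (a - b j)) = 0"
      using q qb by (simp add: \<pi>_def algebra_simps sum_subtractf flip: sum_distrib_left sum_distrib_right)
  qed
  moreover have "Q = plan_measure A {..<m} b \<pi>"
  proof (rule measure_eqI)
    show "sets Q = sets (plan_measure A {..<m} b \<pi>)" using fa by (simp add: finite_atomic_def)
    fix S assume "S \<in> sets Q"
    then have "S \<in> sets borel" using fa by (simp add: finite_atomic_def)
    then show "emeasure Q S = emeasure (plan_measure A {..<m} b \<pi>) S"
      using fa q by (simp add: finite_atomic_def emeasure_plan_measure \<pi>_def)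
  qed
  ultimately show ?thesis using fa by (auto simp: finite_atomic_def)
qed

lemma smpc_m_finite_mixture:
  assumes fA: "finite A" and at: "atoms P = A" and pos: "\<forall>a\<in>A. measure P {a} > 0"
    and "smpc_m P m Q"
  shows "finite_mixture (\<lambda>Q. \<exists>m\<le>card A. smpc_m P m Q) Q"
proof -
  obtain b \<pi> where b: "inj_on b {..<m}" and \<pi>: "martingale_plan A (\<lambda>a. measure P {a}) {..<m} b \<pi>"
    and Q: "Q = plan_measure A {..<m} b \<pi>"
    using smpc_m_imp_plan[OF at \<open>smpc_m P m Q\<close>] by blast
  show ?thesis unfolding Q
    using smpc_m_plan_measure[OF fA _ at pos b] by (intro plan_measure_finite_mixture[OF fA _ \<pi>]) auto
qed

section \<open>Limits of plans\<close>

lemma finite_uniformly_separated: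
  fixes Y :: "real set"
  assumes "finite Y"
  shows "\<exists>h>0. \<forall>y\<in>Y. \<forall>y'\<in>Y. y \<noteq> y' \<longrightarrow> 2 * h < \<bar>y - y'\<bar>"
proof -
  define D where "D = (\<lambda>(y, y'). \<bar>y - y'\<bar>) ` {z \<in> Y \<times> Y. fst z \<noteq> snd z}"
  have "finite D" "\<forall>d\<in>D. d > 0" using assms by (auto simp: D_def)
  show ?thesis
  proof (cases "D = {}")
    case True
    then show ?thesis by (intro exI[of _ 1]) (auto simp: D_def)
  next
    case False
    then have "Min D > 0" using \<open>finite D\<close> \<open>\<forall>d\<in>D. d > 0\<close> by simp
    moreover have "Min D \<le> \<bar>y - y'\<bar>" if "y \<in> Y" "y' \<in> Y" "y \<noteq> y'" for y y'
      using that \<open>finite D\<close> unfolding D_def by (intro Min_le) (auto intro!: image_eqI[of _ _ "(y, y')"])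
    ultimately show ?thesis by (intro exI[of _ "Min D / 3"]) force
  qed
qed

lemma finite_bounded_sequences_convergent_subseq:
  fixes f :: "nat \<Rightarrow> 'a \<Rightarrow> real"
  assumes "finite S" "\<And>s k. s \<in> S \<Longrightarrow> \<bar>f k s\<bar> \<le> B s"
  shows "\<exists>r. strict_mono r \<and> (\<forall>s\<in>S. convergent (\<lambda>k. f (r k) s))"
  using assms
proof (induction S rule: finite_induct)
  case empty
  show ?case by (intro exI[of _ id]) (simp add: strict_mono_def)
next
  case (insert s S)
  then obtain r where r: "strict_mono r" "\<forall>s\<in>S. convergent (\<lambda>k. f (r k) s)" by auto
  have "bounded (range (\<lambda>k. f (r k) s))"
    using insert.prems by (intro boundedI[of _ "B s"]) auto
  then obtain l r' where r': "strict_mono r'" "((\<lambda>k. f (r k) s) \<circ> r') \<longlonglongrightarrow> l"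
    using bounded_imp_convergent_subsequence by blast
  have "convergent (\<lambda>k. f (r (r' k)) t)" if "t \<in> S" for t
    using convergent_subseq_convergent[OF r(2)[rule_format, OF that] r'(1)] by (simp add: o_def)
  moreover have "convergent (\<lambda>k. f (r (r' k)) s)" using r'(2) by (auto simp: convergent_def o_def)
  moreover have "strict_mono (\<lambda>k. r (r' k))" using strict_mono_o[OF r(1) r'(1)] by (simp add: o_def)
  ultimately show ?case by blast
qed

lemma martingale_plan_of_limit:
  fixes \<sigma> :: "nat \<Rightarrow> real \<Rightarrow> real \<Rightarrow> real"
  assumes fA: "finite A" and fY: "finite Y" and sp: "(\<Sum>a\<in>A. p a) = 1" and sr: "(\<Sum>y\<in>Y. r y) = 1"
    and nonneg: "\<And>k a y. a \<in> A \<Longrightarrow> 0 \<le> \<sigma> k a y"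
    and rows: "\<And>k a. a \<in> A \<Longrightarrow> (\<Sum>y\<in>Y. \<sigma> k a y) \<le> p a"
    and cols: "\<And>y. y \<in> Y \<Longrightarrow> (\<lambda>k. \<Sum>a\<in>A. \<sigma> k a y) \<longlonglongrightarrow> r y"
    and moments: "\<And>y. y \<in> Y \<Longrightarrow> (\<lambda>k. \<Sum>a\<in>A. \<sigma> k a y * (a - y)) \<longlonglongrightarrow> 0"
  shows "\<exists>\<tau>. martingale_plan A p Y (\<lambda>y. y) \<tau> \<and> (\<forall>y\<in>Y. (\<Sum>a\<in>A. \<tau> a y) = r y)"
proof -
  have bound: "\<bar>\<sigma> k a y\<bar> \<le> p a" if "a \<in> A" "y \<in> Y" for k a y
  proof -
    have "\<sigma> k a y \<le> (\<Sum>y\<in>Y. \<sigma> k a y)" using that fY nonneg by (intro member_le_sum) auto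
    then show ?thesis using that nonneg rows[of a k] by auto
  qed
  have "\<exists>s. strict_mono s \<and> (\<forall>x\<in>A \<times> Y. convergent (\<lambda>k. \<sigma> (s k) (fst x) (snd x)))"
    by (rule finite_bounded_sequences_convergent_subseq[where B="\<lambda>x. p (fst x)"])
      (use fA fY bound in auto)
  then obtain s where s: "strict_mono s"
    and conv: "\<forall>x\<in>A \<times> Y. convergent (\<lambda>k. \<sigma> (s k) (fst x) (snd x))"
    by blast
  define \<tau> where "\<tau> a y = lim (\<lambda>k. \<sigma> (s k) a y)" for a y
  have lim: "(\<lambda>k. \<sigma> (s k) a y) \<longlonglongrightarrow> \<tau> a y" if "a \<in> A" "y \<in> Y" for a y
    using conv that unfolding \<tau>_def by (auto simp: convergent_LIMSEQ_iff)
  have subseq: "(\<lambda>k. u (s k)) \<longlonglongrightarrow> l" if "u \<longlonglongrightarrow> l" for u :: "nat \<Rightarrow> real" and l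
    using LIMSEQ_subseq_LIMSEQ[OF that s] by (simp add: o_def)
  have \<tau>_nonneg: "\<forall>a\<in>A. \<forall>y\<in>Y. 0 \<le> \<tau> a y"
  proof (intro ballI)
    fix a y assume "a \<in> A" "y \<in> Y"
    then show "0 \<le> \<tau> a y" using nonneg by (intro LIMSEQ_le_const[OF lim]) auto
  qed
  have \<tau>_cols: "\<forall>y\<in>Y. (\<Sum>a\<in>A. \<tau> a y) = r y"
  proof
    fix y assume "y \<in> Y"
    then have "(\<lambda>k. \<Sum>a\<in>A. \<sigma> (s k) a y) \<longlonglongrightarrow> (\<Sum>a\<in>A. \<tau> a y)" using lim by (intro tendsto_sum) auto
    then show "(\<Sum>a\<in>A. \<tau> a y) = r y" using subseq[OF cols[OF \<open>y \<in> Y\<close>]] by (rule LIMSEQ_unique)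
  qed
  have \<tau>_moments: "\<forall>y\<in>Y. (\<Sum>a\<in>A. \<tau> a y * (a - y)) = 0"
  proof
    fix y assume "y \<in> Y"
    then have "(\<lambda>k. \<Sum>a\<in>A. \<sigma> (s k) a y * (a - y)) \<longlonglongrightarrow> (\<Sum>a\<in>A. \<tau> a y * (a - y))"
      using lim by (intro tendsto_sum tendsto_mult tendsto_const) auto
    then show "(\<Sum>a\<in>A. \<tau> a y * (a - y)) = 0" using subseq[OF moments[OF \<open>y \<in> Y\<close>]] by (rule LIMSEQ_unique)
  qed
  have \<tau>_rows_le: "(\<Sum>y\<in>Y. \<tau> a y) \<le> p a" if "a \<in> A" for a
  proof -
    have "(\<lambda>k. \<Sum>y\<in>Y. \<sigma> (s k) a y) \<longlonglongrightarrow> (\<Sum>y\<in>Y. \<tau> a y)" using lim that by (intro tendsto_sum) auto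
    then show ?thesis using rows[OF that] by (intro LIMSEQ_le_const2) auto
  qed
  \<comment> \<open>no row can lose mass in the limit, since both marginals have total mass 1\<close>
  have "(\<Sum>a\<in>A. \<Sum>y\<in>Y. \<tau> a y) = (\<Sum>y\<in>Y. \<Sum>a\<in>A. \<tau> a y)" by (rule sum.swap)
  also have "\<dots> = (\<Sum>a\<in>A. p a)" using sp sr \<tau>_cols by simp
  finally have "\<forall>a\<in>A. (\<Sum>y\<in>Y. \<tau> a y) = p a"
    using sum_strict_mono_ex1[OF fA, of "\<lambda>a. \<Sum>y\<in>Y. \<tau> a y" p] \<tau>_rows_le by force
  then show ?thesis using \<tau>_nonneg \<tau>_cols \<tau>_moments by (auto simp: martingale_plan_def)
qed

lemma window_moment_bound:
  fixes q x :: "'j \<Rightarrow> real"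
  assumes fJ: "finite J" and q: "\<forall>j\<in>J. 0 \<le> q j" and d: "0 < d" "d \<le> h"
  shows "\<bar>\<Sum>j\<in>{j \<in> J. x j \<in> {y - h<..y + h}}. q j * (x j - y)\<bar> \<le>
    d * (\<Sum>j\<in>J. q j) + h * ((\<Sum>j\<in>{j \<in> J. x j \<in> {y - h<..y - d}}. q j) +
      (\<Sum>j\<in>{j \<in> J. x j \<in> {y + d<..y + h}}. q j))"
proof -
  define W where "W = {j \<in> J. x j \<in> {y - h<..y + h}}"
  define outer where "outer j = h * (if x j \<in> {y - h<..y - d} then q j else 0) +
    h * (if x j \<in> {y + d<..y + h} then q j else 0)" for j
  have outer_nonneg: "0 \<le> outer j" if "j \<in> J" for j
    using that q d by (simp add: outer_def)
  have "\<bar>\<Sum>j\<in>W. q j * (x j - y)\<bar> \<le> (\<Sum>j\<in>W. \<bar>q j * (x j - y)\<bar>)" by (rule sum_abs)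
  also have "\<dots> \<le> (\<Sum>j\<in>W. d * q j + outer j)"
  proof (rule sum_mono)
    fix j assume "j \<in> W"
    then have "j \<in> J" "\<bar>x j - y\<bar> \<le> h" by (auto simp: W_def)
    then have abs_eq: "\<bar>q j * (x j - y)\<bar> = q j * \<bar>x j - y\<bar>" using q by (simp add: abs_mult)
    consider "x j \<in> {y - h<..y - d} \<union> {y + d<..y + h}" | "\<bar>x j - y\<bar> \<le> d"
      using \<open>j \<in> W\<close> by (force simp: W_def)
    then show "\<bar>q j * (x j - y)\<bar> \<le> d * q j + outer j"
    proof cases
      case 1
      then have "h * q j \<le> outer j" using q \<open>j \<in> J\<close> d by (auto simp: outer_def)
      moreover have "q j * \<bar>x j - y\<bar> \<le> h * q j"
        using q \<open>j \<in> J\<close> \<open>\<bar>x j - y\<bar> \<le> h\<close> by (metis mult.commute mult_left_mono)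
      moreover have "0 \<le> d * q j" using q \<open>j \<in> J\<close> d by simp
      ultimately show ?thesis unfolding abs_eq by linarith
    next
      case 2
      then have "q j * \<bar>x j - y\<bar> \<le> d * q j" using q \<open>j \<in> J\<close> by (metis mult.commute mult_left_mono)
      then show ?thesis unfolding abs_eq using outer_nonneg[OF \<open>j \<in> J\<close>] by linarith
    qed
  qed
  also have "\<dots> \<le> (\<Sum>j\<in>J. d * q j + outer j)"
    using fJ q d outer_nonneg by (intro sum_mono2) (auto simp: W_def)
  also have "\<dots> = d * (\<Sum>j\<in>J. q j) + h * ((\<Sum>j\<in>{j \<in> J. x j \<in> {y - h<..y - d}}. q j) +
      (\<Sum>j\<in>{j \<in> J. x j \<in> {y + d<..y + h}}. q j))"
    using fJ by (simp add: outer_def sum.distrib sum.inter_filter distrib_left sum_distrib_left)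
  finally show ?thesis unfolding W_def .
qed

lemma LIMSEQ_zero_if_bounded_by_vanishing:
  fixes M :: "nat \<Rightarrow> real"
  assumes "0 < h" and "\<And>d. 0 < d \<Longrightarrow> d \<le> h \<Longrightarrow> \<exists>u. u \<longlonglongrightarrow> 0 \<and> (\<forall>k. \<bar>M k\<bar> \<le> d + u k)"
  shows "M \<longlonglongrightarrow> 0"
proof (rule LIMSEQ_I)
  fix e :: real assume "0 < e"
  define d where "d = min h (e / 2)"
  have "0 < d" "d \<le> h" "d \<le> e / 2" using assms(1) \<open>0 < e\<close> by (auto simp: d_def)
  then obtain u where u: "u \<longlonglongrightarrow> 0" "\<forall>k. \<bar>M k\<bar> \<le> d + u k" using assms(2) by blast
  obtain N where N: "\<forall>n\<ge>N. \<bar>u n\<bar> < e / 2" using LIMSEQ_D[OF u(1), of "e / 2"] \<open>0 < e\<close> by auto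
  have "\<bar>M n\<bar> < e" if "N \<le> n" for n
    using N[rule_format, OF that] u(2)[rule_format, of n] abs_ge_self[of "u n"] \<open>d \<le> e / 2\<close> by linarith
  then show "\<exists>N. \<forall>n\<ge>N. norm (M n - 0) < e" by auto
qed

lemma window_moment_tendsto_zero:
  fixes q x :: "nat \<Rightarrow> 'j \<Rightarrow> real"
  assumes fJ: "\<And>k. finite (J k)" and q: "\<And>k j. j \<in> J k \<Longrightarrow> 0 \<le> q k j"
    and total: "\<And>k. (\<Sum>j\<in>J k. q k j) = 1" and "0 < h"
    and outer: "\<And>d. 0 < d \<Longrightarrow> d \<le> h \<Longrightarrow>
      (\<lambda>k. \<Sum>j\<in>{j \<in> J k. x k j \<in> {y - h<..y - d}}. q k j) \<longlonglongrightarrow> 0 \<and>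
      (\<lambda>k. \<Sum>j\<in>{j \<in> J k. x k j \<in> {y + d<..y + h}}. q k j) \<longlonglongrightarrow> 0"
  shows "(\<lambda>k. \<Sum>j\<in>{j \<in> J k. x k j \<in> {y - h<..y + h}}. q k j * (x k j - y)) \<longlonglongrightarrow> 0"
proof (rule LIMSEQ_zero_if_bounded_by_vanishing[OF \<open>0 < h\<close>])
  fix d :: real assume d: "0 < d" "d \<le> h"
  define u where "u k = h * ((\<Sum>j\<in>{j \<in> J k. x k j \<in> {y - h<..y - d}}. q k j) +
    (\<Sum>j\<in>{j \<in> J k. x k j \<in> {y + d<..y + h}}. q k j))" for k
  have "u \<longlonglongrightarrow> h * (0 + 0)"
    unfolding u_def using outer[OF d] by (intro tendsto_intros) auto
  moreover have "\<bar>\<Sum>j\<in>{j \<in> J k. x k j \<in> {y - h<..y + h}}. q k j * (x k j - y)\<bar> \<le> d + u k" for k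
    using window_moment_bound[OF fJ[of k] _ d, where q="q k" and x="x k" and y=y] q total[of k]
    by (simp add: u_def)
  ultimately show "\<exists>u. u \<longlonglongrightarrow> 0 \<and>
      (\<forall>k. \<bar>\<Sum>j\<in>{j \<in> J k. x k j \<in> {y - h<..y + h}}. q k j * (x k j - y)\<bar> \<le> d + u k)"
    by auto
qed

lemma sum_disjoint_subsets_le:
  fixes f :: "'j \<Rightarrow> real"
  assumes "finite J" "finite Y" "\<forall>j\<in>J. 0 \<le> f j" "\<forall>y\<in>Y. C y \<subseteq> J"
    and "\<forall>y\<in>Y. \<forall>y'\<in>Y. y \<noteq> y' \<longrightarrow> C y \<inter> C y' = {}"
  shows "(\<Sum>y\<in>Y. \<Sum>j\<in>C y. f j) \<le> (\<Sum>j\<in>J. f j)"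
proof -
  have "(\<Sum>y\<in>Y. \<Sum>j\<in>C y. f j) = (\<Sum>j\<in>(\<Union>y\<in>Y. C y). f j)"
    using assms by (intro sum.UNION_disjoint[symmetric]) (auto intro: finite_subset)
  also have "\<dots> \<le> (\<Sum>j\<in>J. f j)" using assms by (intro sum_mono2) auto
  finally show ?thesis .
qed

lemma sum_Int_Ioc_isolated:
  fixes r :: "real \<Rightarrow> real"
  assumes "y \<in> Y" "\<forall>y'\<in>Y. \<bar>y' - y\<bar> \<le> h \<longrightarrow> y' = y" "y - h \<le> s" "t \<le> y + h"
  shows "(\<Sum>y'\<in>Y \<inter> {s<..t}. r y') = (if s < y \<and> y \<le> t then r y else 0)"
proof -
  have "y' = y" if "y' \<in> Y \<inter> {s<..t}" for y'
  proof -
    have "\<bar>y' - y\<bar> \<le> h" using that assms(3,4) by auto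
    then show ?thesis using assms(2) that by blast
  qed
  then have "Y \<inter> {s<..t} \<subseteq> {y}" by blast
  then show ?thesis using assms(1) by (cases "s < y \<and> y \<le> t") (auto simp: subset_singleton_iff)
qed

lemma window_plans:
  fixes \<pi> :: "nat \<Rightarrow> real \<Rightarrow> 'j \<Rightarrow> real" and b :: "nat \<Rightarrow> 'j \<Rightarrow> real"
  assumes fJ: "\<And>k. finite (J k)" and fY: "finite Y" and sp: "(\<Sum>a\<in>A. p a) = 1"
    and \<pi>: "\<And>k. martingale_plan A p (J k) (b k) (\<pi> k)"
    and conv: "\<And>s t. s \<notin> Y \<Longrightarrow> t \<notin> Y \<Longrightarrow> s \<le> t \<Longrightarrow>
      (\<lambda>k. \<Sum>j\<in>{j \<in> J k. b k j \<in> {s<..t}}. \<Sum>a\<in>A. \<pi> k a j) \<longlonglongrightarrow> (\<Sum>y\<in>Y \<inter> {s<..t}. r y)"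
  shows "\<exists>\<sigma>. (\<forall>k a y. a \<in> A \<longrightarrow> 0 \<le> \<sigma> k a y) \<and> (\<forall>k. \<forall>a\<in>A. (\<Sum>y\<in>Y. \<sigma> k a y) \<le> p a) \<and>
    (\<forall>y\<in>Y. (\<lambda>k. \<Sum>a\<in>A. \<sigma> k a y) \<longlonglongrightarrow> r y) \<and>
    (\<forall>y\<in>Y. (\<lambda>k. \<Sum>a\<in>A. \<sigma> k a y * (a - y)) \<longlonglongrightarrow> 0)"
proof -
  obtain h where "h > 0" and sep: "\<forall>y\<in>Y. \<forall>y'\<in>Y. y \<noteq> y' \<longrightarrow> 2 * h < \<bar>y - y'\<bar>"
    using finite_uniformly_separated[OF fY] by blast
  \<comment> \<open>the windows (y - h, y + h] are disjoint, and their endpoints are continuity points of R\<close>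
  define C where "C k y = {j \<in> J k. b k j \<in> {y - h<..y + h}}" for k y
  define \<sigma> where "\<sigma> k a y = (\<Sum>j\<in>C k y. \<pi> k a j)" for k a y
  define q where "q k j = (\<Sum>a\<in>A. \<pi> k a j)" for k j
  have q_nonneg: "0 \<le> q k j" if "j \<in> J k" for k j
    using martingale_plan_column_nonneg[OF \<pi> that] by (simp add: q_def)
  have total: "(\<Sum>j\<in>J k. q k j) = 1" for k
  proof -
    have "(\<Sum>j\<in>J k. q k j) = (\<Sum>a\<in>A. \<Sum>j\<in>J k. \<pi> k a j)" unfolding q_def by (rule sum.swap)
    then show ?thesis using \<pi>[of k] sp by (simp add: martingale_plan_def)
  qed
  have near: "\<forall>y'\<in>Y. \<bar>y' - y\<bar> \<le> h \<longrightarrow> y' = y" if "y \<in> Y" for y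
    using sep that \<open>h > 0\<close> by force
  have conv_near: "(\<lambda>k. \<Sum>j\<in>{j \<in> J k. b k j \<in> {s<..t}}. q k j) \<longlonglongrightarrow> (if s < y \<and> y \<le> t then r y else 0)"
    if "y \<in> Y" "y - h \<le> s" "s \<le> t" "t \<le> y + h" "s \<noteq> y" "t \<noteq> y" for y s t
  proof -
    have "s \<notin> Y" "t \<notin> Y" using that near[OF \<open>y \<in> Y\<close>] by force+
    from conv[OF this \<open>s \<le> t\<close>] show ?thesis
      unfolding q_def sum_Int_Ioc_isolated[OF \<open>y \<in> Y\<close> near[OF \<open>y \<in> Y\<close>] that(2,4)] .
  qed
  have "\<forall>k. \<forall>a\<in>A. (\<Sum>y\<in>Y. \<sigma> k a y) \<le> p a"
  proof (intro allI ballI)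
    fix k a assume "a \<in> A"
    have "C k y \<inter> C k y' = {}" if "y \<in> Y" "y' \<in> Y" "y \<noteq> y'" for y y'
      using sep that by (force simp: C_def)
    then have "(\<Sum>y\<in>Y. \<sigma> k a y) \<le> (\<Sum>j\<in>J k. \<pi> k a j)"
      unfolding \<sigma>_def using fJ fY \<pi>[of k] \<open>a \<in> A\<close>
      by (intro sum_disjoint_subsets_le) (auto simp: C_def martingale_plan_def)
    then show "(\<Sum>y\<in>Y. \<sigma> k a y) \<le> p a" using \<pi>[of k] \<open>a \<in> A\<close> by (simp add: martingale_plan_def)
  qed
  moreover have "(\<lambda>k. \<Sum>a\<in>A. \<sigma> k a y) \<longlonglongrightarrow> r y" if "y \<in> Y" for y
  proof -
    have "(\<Sum>a\<in>A. \<sigma> k a y) = (\<Sum>j\<in>C k y. q k j)" for k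
      unfolding \<sigma>_def q_def by (rule sum.swap)
    then show ?thesis using conv_near[OF that, of "y - h" "y + h"] \<open>h > 0\<close> by (simp add: C_def)
  qed
  moreover have "(\<lambda>k. \<Sum>a\<in>A. \<sigma> k a y * (a - y)) \<longlonglongrightarrow> 0" if "y \<in> Y" for y
  proof -
    have "(\<Sum>a\<in>A. \<sigma> k a y * (a - y)) = (\<Sum>j\<in>C k y. q k j * (b k j - y))" for k
    proof -
      have "(\<Sum>a\<in>A. \<sigma> k a y * (a - y)) = (\<Sum>j\<in>C k y. \<Sum>a\<in>A. \<pi> k a j * (a - y))"
        unfolding \<sigma>_def by (simp add: sum_distrib_right sum.swap[of _ A])
      also have "\<dots> = (\<Sum>j\<in>C k y. q k j * (b k j - y))"
        using martingale_plan_moment[OF \<pi>] by (intro sum.cong) (auto simp: C_def q_def)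
      finally show ?thesis .
    qed
    moreover have "(\<lambda>k. \<Sum>j\<in>C k y. q k j * (b k j - y)) \<longlonglongrightarrow> 0"
      unfolding C_def using fJ q_nonneg total \<open>h > 0\<close>
    proof (rule window_moment_tendsto_zero)
      fix d assume "0 < d" "d \<le> h"
      then show "(\<lambda>k. \<Sum>j\<in>{j \<in> J k. b k j \<in> {y - h<..y - d}}. q k j) \<longlonglongrightarrow> 0 \<and>
          (\<lambda>k. \<Sum>j\<in>{j \<in> J k. b k j \<in> {y + d<..y + h}}. q k j) \<longlonglongrightarrow> 0"
        using conv_near[OF that, of "y - h" "y - d"] conv_near[OF that, of "y + d" "y + h"] by auto
    qed
    ultimately show ?thesis by simp
  qed
  ultimately show ?thesis using \<pi> by (intro exI[of _ \<sigma>]) (auto simp: \<sigma>_def C_def martingale_plan_def intro!: sum_nonneg)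
qed

lemma measure_plan_measure:
  assumes "finite J" "\<forall>j\<in>J. 0 \<le> (\<Sum>a\<in>A. \<pi> a j)" "S \<in> sets borel"
  shows "measure (plan_measure A J b \<pi>) S = (\<Sum>j\<in>{j \<in> J. b j \<in> S}. \<Sum>a\<in>A. \<pi> a j)"
proof -
  have "(\<Sum>j\<in>{j \<in> J. b j \<in> S}. ennreal (\<Sum>a\<in>A. \<pi> a j)) = ennreal (\<Sum>j\<in>{j \<in> J. b j \<in> S}. \<Sum>a\<in>A. \<pi> a j)"
    using assms(2) by (intro sum_ennreal) auto
  moreover have "0 \<le> (\<Sum>j\<in>{j \<in> J. b j \<in> S}. \<Sum>a\<in>A. \<pi> a j)"
    by (rule sum_nonneg) (use assms(2) in simp)
  ultimately show ?thesis using assms by (simp add: measure_def emeasure_plan_measure)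
qed

lemma sum_Ioc_eq_diff:
  fixes f g :: "'j \<Rightarrow> real"
  assumes "finite J" "s \<le> t"
  shows "(\<Sum>j\<in>{j \<in> J. f j \<in> {s<..t}}. g j) =
    (\<Sum>j\<in>{j \<in> J. f j \<in> {..t}}. g j) - (\<Sum>j\<in>{j \<in> J. f j \<in> {..s}}. g j)"
proof -
  have "{j \<in> J. f j \<in> {..t}} = {j \<in> J. f j \<in> {..s}} \<union> {j \<in> J. f j \<in> {s<..t}}" using assms(2) by auto
  then show ?thesis using assms(1) by (simp add: sum.union_disjoint disjoint_iff)
qed

lemma measure_eq_sum_atoms:
  assumes "real_distribution R" "finite B" "emeasure R B = 1"
  shows "finite (atoms R)" and "\<And>S. S \<in> sets borel \<Longrightarrow> measure R S = (\<Sum>y\<in>atoms R \<inter> S. measure R {y})"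
proof -
  interpret real_distribution R by fact
  have sum_B: "measure R S = (\<Sum>x\<in>S \<inter> B. measure R {x})" if "S \<in> sets borel" for S
    using measure_eq_sum_finite_support[OF prob_space_axioms events_eq_borel assms(2,3) that] .
  have "atoms R \<subseteq> B"
  proof
    fix x assume "x \<in> atoms R"
    show "x \<in> B"
    proof (rule ccontr)
      assume "x \<notin> B"
      have "measure R {x} = (\<Sum>x'\<in>{x} \<inter> B. measure R {x'})" by (rule sum_B) simp
      also have "{x} \<inter> B = {}" using \<open>x \<notin> B\<close> by simp
      finally show False using \<open>x \<in> atoms R\<close> by (simp add: atoms_def)
    qed
  qed
  then show "finite (atoms R)" using assms(2) by (rule finite_subset)
  fix S :: "real set" assume "S \<in> sets borel"
  have "(\<Sum>x\<in>S \<inter> B. measure R {x}) = (\<Sum>y\<in>atoms R \<inter> S. measure R {y})"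
    using assms(2) \<open>atoms R \<subseteq> B\<close> by (intro sum.mono_neutral_right) (auto simp: atoms_def less_le)
  then show "measure R S = (\<Sum>y\<in>atoms R \<inter> S. measure R {y})" using sum_B[OF \<open>S \<in> sets borel\<close>] by simp
qed

lemma smpc_sequence_imp_plans:
  assumes "atoms P = A" "\<forall>k. smpc P (Qs k)"
  shows "\<exists>(m :: nat \<Rightarrow> nat) b \<pi>. \<forall>k. martingale_plan A (\<lambda>a. measure P {a}) {..<m k} (b k) (\<pi> k) \<and>
    Qs k = plan_measure A {..<m k} (b k) (\<pi> k)"
proof -
  have "\<forall>k. \<exists>(m :: nat) b \<pi>. martingale_plan A (\<lambda>a. measure P {a}) {..<m} b \<pi> \<and> Qs k = plan_measure A {..<m} b \<pi>"
  proof
    fix k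
    obtain m where "smpc_m P m (Qs k)" using assms(2) unfolding smpc_def by blast
    then show "\<exists>(m :: nat) b \<pi>. martingale_plan A (\<lambda>a. measure P {a}) {..<m} b \<pi> \<and>
        Qs k = plan_measure A {..<m} b \<pi>"
      using smpc_m_imp_plan[OF assms(1)] by blast
  qed
  from choice[OF this] obtain m :: "nat \<Rightarrow> nat" where "\<forall>k. \<exists>b \<pi>.
      martingale_plan A (\<lambda>a. measure P {a}) {..<m k} b \<pi> \<and> Qs k = plan_measure A {..<m k} b \<pi>"
    by blast
  from choice[OF this] obtain b where "\<forall>k. \<exists>\<pi>.
      martingale_plan A (\<lambda>a. measure P {a}) {..<m k} (b k) \<pi> \<and> Qs k = plan_measure A {..<m k} (b k) \<pi>"
    by blast
  from choice[OF this] show ?thesis by blast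
qed

lemma tendsto_cdf_diff:
  assumes "real_distribution R" "weak_conv_m Qs R" "measure R {s} = 0" "measure R {t} = 0"
  shows "(\<lambda>k. cdf (Qs k) t - cdf (Qs k) s) \<longlonglongrightarrow> cdf R t - cdf R s"
proof -
  interpret real_distribution R by fact
  show ?thesis using assms(2-4) by (intro tendsto_diff) (auto simp: weak_conv_m_def weak_conv_def isCont_cdf)
qed

lemma eq_plan_measure_of_column_masses:
  assumes "real_distribution R" "finite Y"
    and R: "\<And>S. S \<in> sets borel \<Longrightarrow> measure R S = (\<Sum>y\<in>Y \<inter> S. measure R {y})"
    and \<tau>: "\<forall>y\<in>Y. (\<Sum>a\<in>A. \<tau> a y) = measure R {y}"
  shows "R = plan_measure A Y (\<lambda>y. y) \<tau>"
proof (rule measure_eqI)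
  interpret real_distribution R by fact
  fix S assume "S \<in> sets R"
  then have "S \<in> sets borel" by simp
  then have "emeasure R S = ennreal (\<Sum>y\<in>Y \<inter> S. measure R {y})"
    by (simp add: emeasure_eq_measure R[OF \<open>S \<in> sets borel\<close>])
  also have "\<dots> = (\<Sum>y\<in>Y \<inter> S. ennreal (\<Sum>a\<in>A. \<tau> a y))"
    using \<tau> by (simp add: sum_ennreal)
  also have "\<dots> = emeasure (plan_measure A Y (\<lambda>y. y) \<tau>) S"
    using assms(2) \<open>S \<in> sets borel\<close> by (simp add: emeasure_plan_measure Int_def)
  finally show "emeasure R S = emeasure (plan_measure A Y (\<lambda>y. y) \<tau>) S" .
qed (use assms(1) in \<open>simp add: real_distribution.events_eq_borel\<close>)

lemma mpc_finite_support_imp_smpc_m: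
  fixes P R :: "real measure"
  assumes P: "prob_space P" "sets P = sets borel" "finite A" "emeasure P A = 1" "\<forall>a\<in>A. measure P {a} > 0"
    and R: "real_distribution R" and Qs: "\<forall>k. smpc P (Qs k)" "weak_conv_m Qs R"
    and B: "finite B" "emeasure R B = 1"
  shows "\<exists>m. smpc_m P m R"
proof -
  interpret R: real_distribution R by fact
  define p where "p = (\<lambda>a. measure P {a})"
  define r where "r y = measure R {y}" for y
  define Y where "Y = atoms R"
  have at: "atoms P = A" by (rule atoms_eq_finite_support[OF P])
  have fY: "finite Y" unfolding Y_def by (rule measure_eq_sum_atoms(1)[OF R B])
  have R_sum: "measure R S = (\<Sum>y\<in>Y \<inter> S. r y)" if "S \<in> sets borel" for S
    unfolding Y_def r_def by (rule measure_eq_sum_atoms(2)[OF R B that])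
  have sr: "(\<Sum>y\<in>Y. r y) = 1" using R_sum[of UNIV] R.prob_space by simp
  have "measure P A = (\<Sum>x\<in>A \<inter> A. measure P {x})"
    using P(3) by (intro measure_eq_sum_finite_support[OF P(1-4)]) (simp add: finite_imp_closed)
  then have sp: "(\<Sum>a\<in>A. p a) = 1" using P(4) by (simp add: p_def measure_def)
  obtain m :: "nat \<Rightarrow> nat" and b \<pi> where \<pi>: "\<And>k. martingale_plan A p {..<m k} (b k) (\<pi> k)"
    and Qs_eq: "\<And>k. Qs k = plan_measure A {..<m k} (b k) (\<pi> k)"
    using smpc_sequence_imp_plans[OF at Qs(1)] unfolding p_def by blast
  have cdf_Qs: "cdf (Qs k) x = (\<Sum>j\<in>{j \<in> {..<m k}. b k j \<in> {..x}}. \<Sum>a\<in>A. \<pi> k a j)" for k x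
    unfolding cdf_def Qs_eq using martingale_plan_column_nonneg[OF \<pi>] by (intro measure_plan_measure) auto
  have cdf_R: "cdf R x = (\<Sum>y\<in>{y \<in> Y. y \<in> {..x}}. r y)" for x
    unfolding cdf_def R_sum[OF atMost_borel] by (rule sum.cong) auto
  have "(\<lambda>k. \<Sum>j\<in>{j \<in> {..<m k}. b k j \<in> {s<..t}}. \<Sum>a\<in>A. \<pi> k a j) \<longlonglongrightarrow> (\<Sum>y\<in>Y \<inter> {s<..t}. r y)"
    if "s \<notin> Y" "t \<notin> Y" "s \<le> t" for s t
  proof -
    have "measure R {s} = 0" "measure R {t} = 0"
      using that measure_nonneg[of R "{s}"] measure_nonneg[of R "{t}"] by (auto simp: Y_def atoms_def)
    note lim = tendsto_cdf_diff[OF R Qs(2) this]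
    have "cdf R t - cdf R s = (\<Sum>y\<in>Y \<inter> {s<..t}. r y)"
      unfolding cdf_R sum_Ioc_eq_diff[OF fY \<open>s \<le> t\<close>, symmetric] by (rule sum.cong) auto
    moreover have "cdf (Qs k) t - cdf (Qs k) s =
        (\<Sum>j\<in>{j \<in> {..<m k}. b k j \<in> {s<..t}}. \<Sum>a\<in>A. \<pi> k a j)" for k
      unfolding cdf_Qs by (rule sum_Ioc_eq_diff[symmetric]) (simp_all add: \<open>s \<le> t\<close>)
    ultimately show ?thesis using lim by simp
  qed
  from window_plans[where J="\<lambda>k. {..<m k}", OF _ fY sp \<pi> this] obtain \<sigma>
    where \<sigma>: "\<forall>k a y. a \<in> A \<longrightarrow> 0 \<le> \<sigma> k a y" "\<forall>k. \<forall>a\<in>A. (\<Sum>y\<in>Y. \<sigma> k a y) \<le> p a"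
      "\<forall>y\<in>Y. (\<lambda>k. \<Sum>a\<in>A. \<sigma> k a y) \<longlonglongrightarrow> r y" "\<forall>y\<in>Y. (\<lambda>k. \<Sum>a\<in>A. \<sigma> k a y * (a - y)) \<longlonglongrightarrow> 0"
    by auto
  have "\<exists>\<tau>. martingale_plan A p Y (\<lambda>y. y) \<tau> \<and> (\<forall>y\<in>Y. (\<Sum>a\<in>A. \<tau> a y) = r y)"
    by (rule martingale_plan_of_limit[OF P(3) fY sp sr, where \<sigma>=\<sigma>]) (use \<sigma> in auto)
  then obtain \<tau> where \<tau>: "martingale_plan A p Y (\<lambda>y. y) \<tau>" "\<forall>y\<in>Y. (\<Sum>a\<in>A. \<tau> a y) = r y"
    by blast
  have R_eq: "R = plan_measure A Y (\<lambda>y. y) \<tau>"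
    by (rule eq_plan_measure_of_column_masses[OF R fY R_sum[unfolded r_def] \<tau>(2)[unfolded r_def]])
  have "smpc_m P (card (used_columns A Y \<tau>)) (plan_measure A Y (\<lambda>y. y) \<tau>)"
    by (rule smpc_m_plan_measure[OF P(3) fY at P(5) inj_on_id2 \<tau>(1)[unfolded p_def]])
  then show ?thesis by (subst R_eq) blast
qed

theorem corollary1:
  fixes P R :: "real measure" and A :: "real set" and n :: nat
  assumes "prob_space P" and "sets P = sets borel"
    and "finite A" and "card A = n"
    and "emeasure P A = 1" and "\<forall>a\<in>A. measure P {a} > 0"
    and "mpc P R"
  shows "(\<exists>Rs. (\<forall>k. finite_mixture (\<lambda>Q. \<exists>m\<le>n. smpc_m P m Q) (Rs k)) \<and> weak_conv_m Rs R)
       \<and> ((\<exists>B. finite B \<and> B \<in> sets borel \<and> emeasure R B = 1)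
            \<longrightarrow> finite_mixture (\<lambda>Q. \<exists>m\<le>n. smpc_m P m Q) R)"
proof -
  have at: "atoms P = A" using atoms_eq_finite_support assms(1,2,3,5,6) by blast
  have mixture: "finite_mixture (\<lambda>Q. \<exists>m\<le>n. smpc_m P m Q) Q" if "smpc P Q" for Q
    using that smpc_m_finite_mixture[OF assms(3) at assms(6)] assms(4) by (auto simp: smpc_def)
  obtain Qs where R: "real_distribution R" and Qs: "\<forall>k. smpc P (Qs k)" "weak_conv_m Qs R"
    using assms(7) unfolding mpc_def by blast
  show ?thesis
  proof (intro conjI impI)
    show "\<exists>Rs. (\<forall>k. finite_mixture (\<lambda>Q. \<exists>m\<le>n. smpc_m P m Q) (Rs k)) \<and> weak_conv_m Rs R"
      using Qs mixture by (intro exI[of _ Qs]) simp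
  next
    assume "\<exists>B. finite B \<and> B \<in> sets borel \<and> emeasure R B = 1"
    then obtain B where "finite B" "emeasure R B = 1" by blast
    then obtain m where "smpc_m P m R" using mpc_finite_support_imp_smpc_m[OF assms(1,2,3,5,6) R Qs] by blast
    then show "finite_mixture (\<lambda>Q. \<exists>m\<le>n. smpc_m P m Q) R" using mixture by (auto simp: smpc_def)
  qed
qed

end
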